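(* Let $\pi_0:Z_0\to Z$ be the minimal resolution of a log terminal surface singularity, with exceptional curves $E_1,\dots,E_r$, $b_i=-E_i^2$, and numerical cycle $Z_{\mathrm{num}}$. Let $D=\sum_{i=1}^r n_iE_i$ be an effective exceptional divisor and let $s$ be the minimal integer with $D\le sZ_{\mathrm{num}}$. Then $$-D^2\ge 2s+\sum_{i=1}^r(b_i-2)n_i.$$
   Context: The numerical cycle $Z_{\mathrm{num}}$ is the minimal nonzero effective $\pi_0$-exceptional divisor $F$ with $F\cdot E_i\le0$ for all $i$. *)

theory Defs
  imports Complex_Main
begin

text \<open>Exceptional curves are indexed by 0..<r; M i j is the intersection number E_i . E_j
  (so b_i = - M i i).  Divisors supported on the exceptional locus are functions
  nat => int (coefficients n_i of E_i, for i < r).\<close>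

definition inter :: "nat \<Rightarrow> (nat \<Rightarrow> nat \<Rightarrow> int) \<Rightarrow> (nat \<Rightarrow> int) \<Rightarrow> (nat \<Rightarrow> int) \<Rightarrow> int" where
  "inter r M D F = (\<Sum>i<r. \<Sum>j<r. D i * F j * M i j)"

definition inter_curve :: "nat \<Rightarrow> (nat \<Rightarrow> nat \<Rightarrow> int) \<Rightarrow> (nat \<Rightarrow> int) \<Rightarrow> nat \<Rightarrow> int" where
  "inter_curve r M D k = (\<Sum>i<r. D i * M i k)"

definition effective :: "nat \<Rightarrow> (nat \<Rightarrow> int) \<Rightarrow> bool" where
  "effective r D \<longleftrightarrow> (\<forall>i<r. 0 \<le> D i)"

definition div_le :: "nat \<Rightarrow> (nat \<Rightarrow> int) \<Rightarrow> (nat \<Rightarrow> int) \<Rightarrow> bool" where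
  "div_le r D F \<longleftrightarrow> (\<forall>i<r. D i \<le> F i)"

definition num_cycle_cand :: "nat \<Rightarrow> (nat \<Rightarrow> nat \<Rightarrow> int) \<Rightarrow> (nat \<Rightarrow> int) \<Rightarrow> bool" where
  "num_cycle_cand r M F \<longleftrightarrow> effective r F \<and> (\<exists>i<r. F i \<noteq> 0) \<and> (\<forall>k<r. inter_curve r M F k \<le> 0)"

definition is_num_cycle :: "nat \<Rightarrow> (nat \<Rightarrow> nat \<Rightarrow> int) \<Rightarrow> (nat \<Rightarrow> int) \<Rightarrow> bool" where
  "is_num_cycle r M Z \<longleftrightarrow> num_cycle_cand r M Z \<and> (\<forall>F. num_cycle_cand r M F \<longrightarrow> div_le r Z F)"

definition dual_edge :: "nat \<Rightarrow> (nat \<Rightarrow> nat \<Rightarrow> int) \<Rightarrow> nat \<Rightarrow> nat \<Rightarrow> bool" where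
  "dual_edge r M i j \<longleftrightarrow> i < r \<and> j < r \<and> i \<noteq> j \<and> M i j = 1"

definition dual_tree :: "nat \<Rightarrow> (nat \<Rightarrow> nat \<Rightarrow> int) \<Rightarrow> bool" where
  "dual_tree r M \<longleftrightarrow>
     (\<forall>i<r. \<forall>j<r. (dual_edge r M)\<^sup>*\<^sup>* i j) \<and>
     card {(i, j). i < j \<and> dual_edge r M i j} = r - 1"

definition neg_definite :: "nat \<Rightarrow> (nat \<Rightarrow> nat \<Rightarrow> int) \<Rightarrow> bool" where
  "neg_definite r M \<longleftrightarrow>
     (\<forall>x :: nat \<Rightarrow> real. (\<exists>i<r. x i \<noteq> 0) \<longrightarrow> (\<Sum>i<r. \<Sum>j<r. x i * x j * of_int (M i j)) < 0)"

text \<open>Discrepancies: K_{Z_0} = sum a_i E_i numerically over Z, determined by adjunction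
  K . E_i = -2 - E_i^2 (E_i smooth rational).  Log terminal: all a_i > -1.\<close>
definition discrepancies_gt_minus_one :: "nat \<Rightarrow> (nat \<Rightarrow> nat \<Rightarrow> int) \<Rightarrow> bool" where
  "discrepancies_gt_minus_one r M \<longleftrightarrow>
     (\<forall>a :: nat \<Rightarrow> real. (\<forall>k<r. (\<Sum>i<r. a i * of_int (M i k)) = - 2 - of_int (M k k))
        \<longrightarrow> (\<forall>i<r. a i > -1))"

text \<open>Numerical data of the minimal resolution of a (singular) log terminal surface singularity:
  r >= 1 smooth rational exceptional curves with simple normal crossings forming a tree,
  negative definite intersection matrix, no (-1)-curves (b_i >= 2), and discrepancies > -1.\<close>
definition log_terminal_min_res :: "nat \<Rightarrow> (nat \<Rightarrow> nat \<Rightarrow> int) \<Rightarrow> bool" where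
  "log_terminal_min_res r M \<longleftrightarrow>
     0 < r \<and>
     (\<forall>i<r. \<forall>j<r. M i j = M j i) \<and>
     (\<forall>i<r. \<forall>j<r. i \<noteq> j \<longrightarrow> M i j = 0 \<or> M i j = 1) \<and>
     (\<forall>i<r. M i i \<le> -2) \<and>
     dual_tree r M \<and>
     neg_definite r M \<and>
     discrepancies_gt_minus_one r M"

end

theory Submission imports Defs "Jordan_Normal_Form.Determinant" begin

text \<open>Let \<open>K = \<Sum> a\<^sub>i E\<^sub>i\<close> be the numerical canonical divisor, \<open>K\<cdot>E\<^sub>i = b\<^sub>i - 2\<close> by adjunction,
  and \<open>\<chi>\<^sub>2(A) = -A\<^sup>2 - K\<cdot>A\<close>, which is \<open>2\<chi>(O\<^sub>A)\<close> by Riemann-Roch; the claim is \<open>\<chi>\<^sub>2(D) \<ge> 2s\<close>.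
  Since all discrepancies \<open>a\<^sub>i\<close> exceed \<open>-1\<close>, Artin's argument gives \<open>\<chi>\<^sub>2(A) \<ge> 2\<close> for every nonzero
  effective \<open>A\<close>: for a minimal counterexample \<open>A\<close>, removing one \<open>E\<^sub>k\<close> from \<open>A\<close> shows
  \<open>(A + K)\<cdot>E\<^sub>k \<ge> 0\<close> whenever \<open>(A + K)\<^sub>k > 0\<close>, so \<open>A + K \<le> 0\<close> by the negativity lemma, which is
  absurd.  Then peel off the numerical cycle \<open>Z\<close>: in \<open>D = min(D, Z) + (D - Z)\<^sup>+\<close> the second
  summand needs one multiple of \<open>Z\<close> less, and the two summands intersect nonpositively because
  \<open>Z\<cdot>E\<^sub>i \<le> 0\<close>, so \<open>\<chi>\<^sub>2\<close> grows by at least \<open>2\<close> with each copy of \<open>Z\<close>.\<close>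

lemma quadratic_form_eq_sum_inter:
  fixes x :: "nat \<Rightarrow> real"
  shows "(\<Sum>i<r. \<Sum>j<r. x i * x j * of_int (M i j)) = (\<Sum>j<r. x j * (\<Sum>i<r. x i * of_int (M i j)))"
  by (subst sum.swap) (simp add: sum_distrib_left mult_ac)

lemma neg_definite_kernel_trivial:
  fixes x :: "nat \<Rightarrow> real"
  assumes "neg_definite r M" and "\<forall>k<r. (\<Sum>i<r. x i * of_int (M i k)) = 0"
  shows "\<forall>i<r. x i = 0"
proof (rule ccontr)
  assume "\<not> (\<forall>i<r. x i = 0)"
  then have "(\<Sum>i<r. \<Sum>j<r. x i * x j * of_int (M i j)) < 0"
    using assms(1) unfolding neg_definite_def by blast
  moreover have "(\<Sum>i<r. \<Sum>j<r. x i * x j * of_int (M i j)) = 0"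
    using assms(2) by (simp add: quadratic_form_eq_sum_inter)
  ultimately show False by simp
qed

lemma neg_definite_solvable:
  fixes b :: "nat \<Rightarrow> real"
  assumes "neg_definite r M"
  shows "\<exists>a. \<forall>k<r. (\<Sum>i<r. a i * of_int (M i k)) = b k"
proof -
  define A :: "real mat" where "A = mat r r (\<lambda>(k, i). of_int (M i k))"
  have A: "A \<in> carrier_mat r r" unfolding A_def by auto
  have row: "(A *\<^sub>v v) $ k = (\<Sum>i<r. v $ i * of_int (M i k))" if "v \<in> carrier_vec r" "k < r" for v k
    using that by (simp add: A_def mult_mat_vec_def scalar_prod_def atLeast0LessThan mult.commute)
  have "det A \<noteq> 0"
  proof
    assume "det A = 0"
    then obtain v where v: "v \<in> carrier_vec r" "v \<noteq> 0\<^sub>v r" "A *\<^sub>v v = 0\<^sub>v r"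
      using det_0_iff_vec_prod_zero_field[OF A] by auto
    have "\<forall>k<r. (\<Sum>i<r. v $ i * of_int (M i k)) = 0"
      using v(3) row[OF v(1)] by simp
    with assms have "\<forall>i<r. v $ i = 0" by (rule neg_definite_kernel_trivial)
    then have "v = 0\<^sub>v r" using v(1) by (intro eq_vecI) auto
    with v(2) show False by contradiction
  qed
  then obtain B where B: "B \<in> carrier_mat r r" "A * B = 1\<^sub>m r"
    using det_non_zero_imp_unit[OF A] unfolding Units_def ring_mat_def by auto
  define v where "v = B *\<^sub>v vec r b"
  have v: "v \<in> carrier_vec r" unfolding v_def using B(1) by simp
  have "A *\<^sub>v v = vec r b"
    unfolding v_def using assoc_mult_mat_vec[OF A B(1), of "vec r b"] B(2) by simp
  then have "\<forall>k<r. (\<Sum>i<r. v $ i * of_int (M i k)) = b k"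
    using row[OF v] by simp
  then show ?thesis by blast
qed

lemma negativity_lemma:
  fixes x :: "nat \<Rightarrow> real"
  assumes nd: "neg_definite r M"
    and off_diag: "\<forall>i<r. \<forall>j<r. i \<noteq> j \<longrightarrow> 0 \<le> M i j"
    and meets: "\<forall>k<r. 0 < x k \<longrightarrow> 0 \<le> (\<Sum>i<r. x i * of_int (M i k))"
  shows "\<forall>k<r. x k \<le> 0"
proof -
  define p where "p i = max (x i) 0" for i
  \<comment> \<open>Off the diagonal \<open>M\<close> is nonnegative, so \<open>p\<cdot>E\<^sub>k \<ge> x\<cdot>E\<^sub>k \<ge> 0\<close> wherever \<open>p\<^sub>k > 0\<close>, whence \<open>p\<^sup>2 \<ge> 0\<close>.\<close>
  have p_meets: "0 \<le> p k * (\<Sum>i<r. p i * of_int (M i k))" if k: "k < r" for k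
  proof (cases "0 < x k")
    case True
    have "(\<Sum>i<r. x i * of_int (M i k)) \<le> (\<Sum>i<r. p i * of_int (M i k))"
    proof (rule sum_mono)
      fix i assume "i \<in> {..<r}"
      show "x i * of_int (M i k) \<le> p i * of_int (M i k)"
      proof (cases "i = k")
        case False
        with \<open>i \<in> {..<r}\<close> k have "0 \<le> M i k" using off_diag by simp
        then show ?thesis by (intro mult_right_mono) (simp_all add: p_def)
      qed (simp add: p_def True)
    qed
    then have "0 \<le> (\<Sum>i<r. p i * of_int (M i k))" using meets k True by fastforce
    then show ?thesis by (simp add: p_def)
  qed (simp add: p_def)
  have "0 \<le> (\<Sum>i<r. \<Sum>j<r. p i * p j * of_int (M i j))"
    unfolding quadratic_form_eq_sum_inter using p_meets by (intro sum_nonneg) simp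
  then have "\<forall>i<r. p i = 0" using nd unfolding neg_definite_def by fastforce
  then show ?thesis by (auto simp: p_def)
qed

definition canonical_coeffs :: "nat \<Rightarrow> (nat \<Rightarrow> nat \<Rightarrow> int) \<Rightarrow> (nat \<Rightarrow> real) \<Rightarrow> bool" where
  "canonical_coeffs r M a \<longleftrightarrow> (\<forall>k<r. (\<Sum>i<r. a i * of_int (M i k)) = - 2 - of_int (M k k))"

lemma canonical_coeffs_exist:
  assumes "neg_definite r M"
  shows "\<exists>a. canonical_coeffs r M a"
  using neg_definite_solvable[OF assms, of "\<lambda>k. - 2 - of_int (M k k)"] unfolding canonical_coeffs_def by blast

lemma canonical_coeffs_nonpos:
  assumes nd: "neg_definite r M"
    and off_diag: "\<forall>i<r. \<forall>j<r. i \<noteq> j \<longrightarrow> 0 \<le> M i j"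
    and no_minus_one_curves: "\<forall>i<r. M i i \<le> -2"
    and "canonical_coeffs r M a"
  shows "\<forall>i<r. a i \<le> 0"
proof (rule negativity_lemma[OF nd off_diag], intro allI impI)
  fix k assume "k < r"
  then have "(\<Sum>i<r. a i * of_int (M i k)) = - 2 - of_int (M k k)" and "M k k \<le> -2"
    using assms(4) no_minus_one_curves unfolding canonical_coeffs_def by auto
  then show "0 \<le> (\<Sum>i<r. a i * of_int (M i k))" by linarith
qed

definition twice_chi :: "nat \<Rightarrow> (nat \<Rightarrow> nat \<Rightarrow> int) \<Rightarrow> (nat \<Rightarrow> int) \<Rightarrow> int" where
  "twice_chi r M A = - inter r M A A - (\<Sum>i<r. (- M i i - 2) * A i)"

lemma inter_commute:
  assumes "\<forall>i<r. \<forall>j<r. M i j = M j i"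
  shows "inter r M A B = inter r M B A"
proof -
  have "inter r M A B = (\<Sum>j<r. \<Sum>i<r. A i * B j * M i j)"
    unfolding inter_def by (rule sum.swap)
  also have "\<dots> = inter r M B A"
    unfolding inter_def using assms by (intro sum.cong refl) (simp add: mult_ac)
  finally show ?thesis .
qed

lemma inter_curve_eq_inter:
  assumes "k < r"
  shows "inter r M A (\<lambda>i. if i = k then 1 else 0) = inter_curve r M A k"
  unfolding inter_def inter_curve_def using assms by (simp add: if_distrib if_distribR cong: if_cong)

lemma twice_chi_add:
  assumes "\<forall>i<r. \<forall>j<r. M i j = M j i"
  shows "twice_chi r M (\<lambda>i. A i + B i) = twice_chi r M A + twice_chi r M B - 2 * inter r M A B"
proof -
  have "inter r M (\<lambda>i. A i + B i) (\<lambda>i. A i + B i) =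
      inter r M A A + inter r M A B + inter r M B A + inter r M B B"
    unfolding inter_def by (simp add: algebra_simps sum.distrib)
  then show ?thesis
    using inter_commute[OF assms, of B A]
    unfolding twice_chi_def by (simp add: distrib_left sum.distrib)
qed

lemma twice_chi_zero:
  assumes "\<forall>i<r. A i = 0"
  shows "twice_chi r M A = 0"
  using assms unfolding twice_chi_def inter_def by simp

lemma twice_chi_curve:
  assumes "k < r"
  shows "twice_chi r M (\<lambda>i. if i = k then 1 else 0) = 2"
  using assms inter_curve_eq_inter[OF assms, of M "\<lambda>i. if i = k then 1 else 0"]
  unfolding twice_chi_def inter_curve_def by (simp add: if_distrib if_distribR cong: if_cong)

lemma inter_curve_ge_of_twice_chi_lt_two:
  assumes sym: "\<forall>i<r. \<forall>j<r. M i j = M j i"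
    and k: "k < r"
    and lt: "twice_chi r M A < 2"
    and B_def: "B = (\<lambda>i. if i = k then A i - 1 else A i)"
    and B_ge: "\<exists>i<r. B i \<noteq> 0 \<Longrightarrow> 2 \<le> twice_chi r M B"
  shows "2 + M k k \<le> inter_curve r M A k"
proof -
  have A_eq: "A = (\<lambda>i. B i + (if i = k then 1 else 0))" unfolding B_def by auto
  have chi_A: "twice_chi r M A = twice_chi r M B + 2 - 2 * inter_curve r M B k"
    using twice_chi_add[OF sym, of B "\<lambda>i. if i = k then 1 else 0"]
      twice_chi_curve[OF k] inter_curve_eq_inter[OF k] A_eq by simp
  have "2 \<le> inter_curve r M B k"
  proof (cases "\<exists>i<r. B i \<noteq> 0")
    case True
    then have "2 \<le> twice_chi r M B" by (rule B_ge)
    then show ?thesis using chi_A lt by presburger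
  next
    case False
    then have "twice_chi r M B = 0" and "inter_curve r M B k = 0"
      using twice_chi_zero unfolding inter_curve_def by auto
    then show ?thesis using chi_A lt by linarith
  qed
  moreover have "inter_curve r M A k = (\<Sum>i<r. B i * M i k + (if i = k then M i k else 0))"
    unfolding inter_curve_def by (intro sum.cong refl) (simp add: B_def algebra_simps)
  then have "inter_curve r M A k = inter_curve r M B k + M k k"
    using k unfolding inter_curve_def by (simp add: sum.distrib)
  ultimately show ?thesis by linarith
qed

lemma twice_chi_ge_two:
  fixes a :: "nat \<Rightarrow> real"
  assumes nd: "neg_definite r M"
    and off_diag: "\<forall>i<r. \<forall>j<r. i \<noteq> j \<longrightarrow> 0 \<le> M i j"
    and sym: "\<forall>i<r. \<forall>j<r. M i j = M j i"
    and canon: "canonical_coeffs r M a"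
    and log_terminal: "\<forall>i<r. -1 < a i"
    and a_nonpos: "\<forall>i<r. a i \<le> 0"
    and "effective r A" and "\<exists>i<r. A i \<noteq> 0"
  shows "2 \<le> twice_chi r M A"
  using assms(7,8)
proof (induction "\<Sum>i<r. nat (A i)" arbitrary: A rule: less_induct)
  case less
  show ?case
  proof (rule ccontr)
    assume lt: "\<not> 2 \<le> twice_chi r M A"
    define Y where "Y i = of_int (A i) + a i" for i
    have "0 \<le> (\<Sum>i<r. Y i * of_int (M i k))" if k: "k < r" "0 < Y k" for k
    proof -
      have "0 < real_of_int (A k)" using k a_nonpos unfolding Y_def by force
      then have A_k: "1 \<le> A k" by simp
      define B where "B = (\<lambda>i. if i = k then A i - 1 else A i)"
      have "(\<Sum>i<r. nat (A i)) = (\<Sum>i<r. nat (B i) + (if i = k then 1 else 0))"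
        using A_k by (intro sum.cong refl) (auto simp: B_def)
      also have "\<dots> = (\<Sum>i<r. nat (B i)) + 1" using k(1) by (simp add: sum.distrib)
      finally have smaller: "(\<Sum>i<r. nat (B i)) < (\<Sum>i<r. nat (A i))" by simp
      have "effective r B" using less.prems(1) A_k unfolding effective_def B_def by auto
      then have "2 + M k k \<le> inter_curve r M A k"
        using inter_curve_ge_of_twice_chi_lt_two[OF sym k(1), of A B] less.hyps[OF smaller] lt B_def by auto
      moreover have "(\<Sum>i<r. Y i * of_int (M i k)) = of_int (inter_curve r M A k) - 2 - of_int (M k k)"
        using canon k(1)
        unfolding Y_def inter_curve_def canonical_coeffs_def by (simp add: algebra_simps sum.distrib)
      ultimately show ?thesis by linarith
    qed
    then have "\<forall>k<r. Y k \<le> 0" using negativity_lemma[OF nd off_diag] by blast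
    moreover obtain i where "i < r" "A i \<noteq> 0" using less.prems(2) by auto
    ultimately show False
      using less.prems(1) log_terminal unfolding effective_def Y_def by force
  qed
qed

lemma inter_min_excess_nonpos:
  assumes off_diag: "\<forall>i<r. \<forall>j<r. i \<noteq> j \<longrightarrow> 0 \<le> M i j"
    and nef: "\<forall>k<r. inter_curve r M Z k \<le> 0"
  shows "inter r M (\<lambda>i. min (D i) (Z i)) (\<lambda>i. max (D i - Z i) 0) \<le> 0"
proof -
  define A where "A i = min (D i) (Z i)" for i
  define C where "C i = max (D i - Z i) 0" for i
  have "inter r M A C = (\<Sum>j<r. C j * inter_curve r M A j)"
    unfolding inter_def inter_curve_def by (subst sum.swap) (simp add: sum_distrib_left mult_ac)
  also have "\<dots> \<le> 0"
  proof (rule sum_nonpos)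
    fix j assume j: "j \<in> {..<r}"
    show "C j * inter_curve r M A j \<le> 0"
    proof (cases "C j = 0")
      case False
      then have A_j: "A j = Z j" unfolding A_def C_def by auto
      have "inter_curve r M A j \<le> inter_curve r M Z j"
        unfolding inter_curve_def
      proof (rule sum_mono)
        fix i assume i: "i \<in> {..<r}"
        show "A i * M i j \<le> Z i * M i j"
        proof (cases "i = j")
          case False
          then have "0 \<le> M i j" using off_diag i j by simp
          then show ?thesis by (intro mult_right_mono) (simp_all add: A_def)
        qed (simp add: A_j)
      qed
      then have "inter_curve r M A j \<le> 0" using nef j by force
      moreover have "0 \<le> C j" unfolding C_def by simp
      ultimately show ?thesis by (simp add: mult_nonneg_nonpos)
    qed simp
  qed
  finally show ?thesis unfolding A_def C_def .
qed

lemma nonneg_of_effective_le_multiple: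
  assumes "effective r Z" and "\<exists>i<r. Z i \<noteq> 0"
    and "effective r D" and "div_le r D (\<lambda>i. s * Z i)"
  shows "0 \<le> s"
proof -
  obtain i where i: "i < r" "Z i \<noteq> 0" using assms(2) by blast
  then have "0 < Z i" and "0 \<le> s * Z i"
    using assms(1,3,4) unfolding effective_def div_le_def by force+
  then show ?thesis by (simp add: zero_le_mult_iff)
qed

lemma twice_chi_ge_multiple:
  assumes sym: "\<forall>i<r. \<forall>j<r. M i j = M j i"
    and off_diag: "\<forall>i<r. \<forall>j<r. i \<noteq> j \<longrightarrow> 0 \<le> M i j"
    and twice_chi_pos: "\<And>A. effective r A \<Longrightarrow> \<exists>i<r. A i \<noteq> 0 \<Longrightarrow> 2 \<le> twice_chi r M A"
    and Z_eff: "effective r Z" and Z_nonzero: "\<exists>i<r. Z i \<noteq> 0"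
    and nef: "\<forall>k<r. inter_curve r M Z k \<le> 0"
    and "effective r D" and "div_le r D (\<lambda>i. s * Z i)"
    and "\<not> div_le r D (\<lambda>i. (s - 1) * Z i)"
  shows "2 * s \<le> twice_chi r M D"
proof -
  obtain m where "s = int m"
    using nonneg_of_effective_le_multiple[OF Z_eff Z_nonzero assms(7,8)] nonneg_int_cases by blast
  with assms(7-9) show ?thesis
  proof (induction m arbitrary: s D)
    case 0
    then have "\<forall>i<r. D i = 0" unfolding effective_def div_le_def by force
    then show ?case using 0 twice_chi_zero by simp
  next
    case (Suc m)
    define A where "A i = min (D i) (Z i)" for i
    define C where "C i = max (D i - Z i) 0" for i
    have C_eff: "effective r C" unfolding effective_def C_def by simp
    have C_le: "div_le r C (\<lambda>i. int m * Z i)"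
      using Suc.prems(2,4) Z_eff unfolding div_le_def C_def effective_def by (auto simp: algebra_simps)
    have C_not_le: "\<not> div_le r C (\<lambda>i. (int m - 1) * Z i)"
      using Suc.prems(3,4) unfolding div_le_def C_def by (auto simp: algebra_simps)
    have "2 * int m \<le> twice_chi r M C" using Suc.IH[OF C_eff C_le C_not_le] by simp
    obtain i where i: "i < r" "int m * Z i < D i"
      using Suc.prems(3,4) unfolding div_le_def by force
    have "0 \<le> Z i" using Z_eff i(1) unfolding effective_def by blast
    then have "0 \<le> int m * Z i" by simp
    moreover have "D i \<le> int m * Z i + Z i"
      using Suc.prems(2,4) i(1) unfolding div_le_def by (simp add: algebra_simps)
    ultimately have "0 < D i" and "0 < Z i" using i(2) by linarith+
    then have "0 < A i" unfolding A_def by simp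
    moreover have "effective r A" using Suc.prems(1) Z_eff unfolding effective_def A_def by simp
    ultimately have "2 \<le> twice_chi r M A" using twice_chi_pos i(1) by force
    moreover have "inter r M A C \<le> 0" unfolding A_def C_def by (rule inter_min_excess_nonpos[OF off_diag nef])
    moreover have "D = (\<lambda>i. A i + C i)" unfolding A_def C_def by (auto simp: fun_eq_iff)
    ultimately show ?case using twice_chi_add[OF sym, of A C] \<open>2 * int m \<le> twice_chi r M C\<close> Suc.prems(4)
      by simp
  qed
qed

lemma log_terminal_min_res_off_diag_nonneg:
  assumes "log_terminal_min_res r M"
  shows "\<forall>i<r. \<forall>j<r. i \<noteq> j \<longrightarrow> 0 \<le> M i j"
proof -
  have "\<forall>i<r. \<forall>j<r. i \<noteq> j \<longrightarrow> M i j = 0 \<or> M i j = 1"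
    using assms unfolding log_terminal_min_res_def by blast
  then show ?thesis by fastforce
qed

lemma log_terminal_min_res_twice_chi_ge_two:
  assumes "log_terminal_min_res r M" and "effective r A" and "\<exists>i<r. A i \<noteq> 0"
  shows "2 \<le> twice_chi r M A"
proof -
  have sym: "\<forall>i<r. \<forall>j<r. M i j = M j i" and nd: "neg_definite r M"
    and no_minus_one_curves: "\<forall>i<r. M i i \<le> -2"
    and log_terminal: "discrepancies_gt_minus_one r M"
    using assms(1) unfolding log_terminal_min_res_def by blast+
  note off_diag = log_terminal_min_res_off_diag_nonneg[OF assms(1)]
  obtain a where canon: "canonical_coeffs r M a" using canonical_coeffs_exist[OF nd] by blast
  have "\<forall>i<r. -1 < a i"
    using log_terminal canon unfolding discrepancies_gt_minus_one_def canonical_coeffs_def by blast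
  moreover have "\<forall>i<r. a i \<le> 0"
    using canonical_coeffs_nonpos[OF nd off_diag no_minus_one_curves canon] .
  ultimately show ?thesis using twice_chi_ge_two[OF nd off_diag sym canon] assms(2,3) by blast
qed

theorem mainTheorem11:
  fixes r :: nat and M :: "nat \<Rightarrow> nat \<Rightarrow> int"
    and Z n :: "nat \<Rightarrow> int" and s :: int
  assumes "log_terminal_min_res r M"
    and "is_num_cycle r M Z"
    and "effective r n"
    and "div_le r n (\<lambda>i. s * Z i)"
    and "\<forall>t :: int. div_le r n (\<lambda>i. t * Z i) \<longrightarrow> s \<le> t"
  shows "- inter r M n n \<ge> 2 * s + (\<Sum>i<r. (- M i i - 2) * n i)"
proof -
  have sym: "\<forall>i<r. \<forall>j<r. M i j = M j i"
    using assms(1) unfolding log_terminal_min_res_def by blast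
  have "effective r Z" "\<exists>i<r. Z i \<noteq> 0" "\<forall>k<r. inter_curve r M Z k \<le> 0"
    using assms(2) unfolding is_num_cycle_def num_cycle_cand_def by auto
  moreover have "\<not> div_le r n (\<lambda>i. (s - 1) * Z i)"
  proof
    assume "div_le r n (\<lambda>i. (s - 1) * Z i)"
    then show False using assms(5) by fastforce
  qed
  ultimately have "2 * s \<le> twice_chi r M n"
    using twice_chi_ge_multiple[OF sym log_terminal_min_res_off_diag_nonneg[OF assms(1)]
        log_terminal_min_res_twice_chi_ge_two[OF assms(1)]] assms(3,4)
    by blast
  then show ?thesis unfolding twice_chi_def by simp
qed

end
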